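(* Let $p=0$, $\alpha\in[0,1]$, $0\le h_1<\dots<h_N\le1$, and nonnegative weights $f_0^S(h_j),f_0^{NS}(h_j)$, $j=1,\dots,N$, each summing to $1$; set $f_0(h_j)=\alpha f_0^S(h_j)+(1-\alpha)f_0^{NS}(h_j)$ and assume $f_0(h_N)>0$; write $f_0([h_i,1])=\sum_{j\ge i}f_0(h_j)$, $f_0^S([h_i,1])=\sum_{j\ge i}f_0^S(h_j)$, $f_0^{NS}([h_i,1])=\sum_{j\ge i}f_0^{NS}(h_j)$. Let $m_0^{S,j}\in[-1,1]$ be given. Let $f^{NS,1},\dots,f^{NS,N}\in C([0,+\infty),P([-1,1]))$ (weak topology) with initial data $f_0^{NS,i}$, write $m^{NS,j}(t)=\int_{-1}^1w\,f^{NS,j}(t,dw)$, $$\beta_i(t)=\alpha\sum_{j\ge i}f_0^S(h_j)m_0^{S,j}+(1-\alpha)\sum_{j\ge i}f_0^{NS}(h_j)m^{NS,j}(t),$$ and assume that for all $i$, $t\ge0$ and $\phi\in C^1([-1,1])$, $$\int\phi\,df^{NS,i}(t)=\int\phi\,df_0^{NS,i}+\int_0^t\!\!\int_{-1}^1\phi'(w)\big(\beta_i(s)-f_0([h_i,1])w\big)f^{NS,i}(s,dw)\,ds.$$ Define $$m_\infty^{NS,N}=\begin{cases}\int_{-1}^1w\,f_0^{NS,N}(dw)&\text{if }\alpha f_0^S(h_N)=0,\\ m_0^{S,N}&\text{if }\alpha f_0^S(h_N)>0,\end{cases}$$ and recursively for $i=N-1,\dots,1$, $$m_\infty^{NS,i}=\frac{(1-\alpha)\sum_{j\ge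 i+1}f_0^{NS}(h_j)m_\infty^{NS,j}+\alpha\sum_{j\ge i}f_0^S(h_j)m_0^{S,j}}{\alpha f_0^S([h_i,1])+(1-\alpha)f_0^{NS}([h_{i+1},1])}.$$ Then $f^{NS,i}(t)\to\delta_{m_\infty^{NS,i}}$ weakly as $t\to+\infty$ for every $i=1,\dots,N$. In particular, if $\alpha f_0^S(h_i)=0$ for all $i=1,\dots,N-1$ (no stubborn individuals at levels $h_1,\dots,h_{N-1}$), then $m_\infty^{NS,i}=m_\infty^{NS,N}$ for $i=1,\dots,N-1$.
   Context: $P([-1,1])$ is the set of Borel probability measures on $[-1,1]$; $\delta_x$ is the Dirac mass at $x$. Interpretation: $f^{NS,i}(t)$ is the opinion distribution of non-stubborn individuals at hierarchy level $h_i$, $\alpha f_0^S(h_j)$ (resp. $(1-\alpha)f_0^{NS}(h_j)$) the proportion of stubborn (resp. non-stubborn) individuals at level $h_j$, $m_0^{S,j}$ the mean opinion of stubborn individuals at level $h_j$. The case $p=0$ means hierarchy is strictly respected. *)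

theory Defs
  imports "HOL-Probability.Probability"
begin

text \<open>Parameters: N, alpha, the weights
  fS j = f_0^S(h_j), fNS j = f_0^NS(h_j), the stubborn means mS j = m_0^{S,j},
  and mN0 = the mean of the initial non-stubborn distribution at level N.\<close>

function minf_NS :: "nat \<Rightarrow> real \<Rightarrow> (nat \<Rightarrow> real) \<Rightarrow> (nat \<Rightarrow> real) \<Rightarrow> (nat \<Rightarrow> real)
    \<Rightarrow> real \<Rightarrow> nat \<Rightarrow> real" where
  "minf_NS N \<alpha> fS fNS mS mN0 i =
     (if N \<le> i then (if \<alpha> * fS N = 0 then mN0 else mS N)
      else ((1 - \<alpha>) * (\<Sum>j\<in>{i+1..N}. fNS j * minf_NS N \<alpha> fS fNS mS mN0 j)
              + \<alpha> * (\<Sum>j\<in>{i..N}. fS j * mS j))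
           / (\<alpha> * (\<Sum>j\<in>{i..N}. fS j) + (1 - \<alpha>) * (\<Sum>j\<in>{i+1..N}. fNS j)))"
  by pat_completeness auto
termination
  by (relation "Wellfounded.measure (\<lambda>(N, \<alpha>, fS, fNS, mS, mN0, i). N - i)") auto

end

theory Submission
  imports Defs "HOL-Real_Asymp.Real_Asymp"
begin

(* Testing the equation with w shows that the mean m_i of level i solves a linear equation
   m_i' = g_i - c_i m_i, where c_i = alpha f_0^S([h_i,1]) + (1 - alpha) f_0^NS([h_(i+1),1]) and
   g_i only involves the stubborn means and the means of the levels above i: the
   self-interaction of level i cancels.  Solutions of y' = g - c y with c > 0 and g -> c L
   converge to L, so backward induction from the top level gives m_i -> m_inf^(NS,i) (at the
   top level without stubborn individuals c_N = 0 and m_N stays constant).  Testing with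
   (w - L)^2 for L = m_inf^(NS,i) gives an equation of the same form for the variance around L,
   with a forcing term tending to 0; so the variance vanishes, and a probability measure on
   [-1,1] with small variance around L integrates every continuous function close to its
   value at L. *)

section \<open>Linear relaxation equations\<close>

lemma linear_ode_comparison:
  fixes y g :: "real \<Rightarrow> real"
  assumes deriv: "\<And>s. s \<ge> T \<Longrightarrow> (y has_real_derivative g s - c * y s) (at s)"
    and source_le: "\<And>s. s \<ge> T \<Longrightarrow> g s \<le> c * K"
    and "T \<le> t"
  shows "y t - K \<le> exp (- c * (t - T)) * (y T - K)"
proof -
  define z where "z s = exp (c * s) * (y s - K)" for s
  have "z t \<le> z T"
  proof (rule DERIV_nonpos_imp_nonincreasing[OF \<open>T \<le> t\<close>])
    fix s assume "T \<le> s" "s \<le> t"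
    have "(z has_real_derivative exp (c * s) * (g s - c * K)) (at s)"
      unfolding z_def
      by (rule derivative_eq_intros refl deriv[OF \<open>T \<le> s\<close>])+ (simp add: algebra_simps)
    moreover have "exp (c * s) * (g s - c * K) \<le> 0"
      using source_le[OF \<open>T \<le> s\<close>] by (simp add: mult_nonneg_nonpos)
    ultimately show "\<exists>d. (z has_real_derivative d) (at s) \<and> d \<le> 0" by blast
  qed
  then have "exp (- c * t) * z t \<le> exp (- c * t) * z T"
    by (rule mult_left_mono) simp
  moreover have "exp (- c * t) * z t = y t - K"
    by (simp add: z_def mult.assoc[symmetric] exp_add[symmetric])
  moreover have "exp (- c * t) * z T = exp (- c * (t - T)) * (y T - K)"
    by (simp add: z_def mult.assoc[symmetric] exp_add[symmetric] right_diff_distrib)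
  ultimately show ?thesis by linarith
qed

lemma eventually_linear_ode_less:
  fixes y g :: "real \<Rightarrow> real"
  assumes "c > 0" and deriv: "\<forall>\<^sub>F t in at_top. (y has_real_derivative g t - c * y t) (at t)"
    and "(g \<longlongrightarrow> c * L) at_top" and "L < a"
  shows "\<forall>\<^sub>F t in at_top. y t < a"
proof -
  define K where "K = (L + a) / 2"
  have "c * L < c * K" using \<open>c > 0\<close> \<open>L < a\<close> by (simp add: K_def)
  with \<open>(g \<longlongrightarrow> c * L) at_top\<close> have "\<forall>\<^sub>F t in at_top. g t < c * K"
    by (rule order_tendstoD)
  with deriv have "\<forall>\<^sub>F s in at_top. (y has_real_derivative g s - c * y s) (at s) \<and> g s < c * K"
    by (rule eventually_conj)
  then obtain T where T: "\<And>s. s \<ge> T \<Longrightarrow>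
      (y has_real_derivative g s - c * y s) (at s) \<and> g s < c * K"
    by (auto simp: eventually_at_top_linorder)
  have "((\<lambda>t. exp (- c * (t - T)) * (y T - K)) \<longlongrightarrow> 0) at_top"
    using \<open>c > 0\<close> by real_asymp
  then have "\<forall>\<^sub>F t in at_top. exp (- c * (t - T)) * (y T - K) < a - K"
    by (rule order_tendstoD) (simp add: K_def \<open>L < a\<close>)
  then show ?thesis
    using eventually_ge_at_top[of T]
  proof eventually_elim
    case (elim t)
    have "y t - K \<le> exp (- c * (t - T)) * (y T - K)"
      by (rule linear_ode_comparison[OF _ _ elim(2)]) (use T in \<open>auto intro: less_imp_le\<close>)
    with elim(1) show ?case by linarith
  qed
qed

lemma tendsto_linear_ode:
  fixes y g :: "real \<Rightarrow> real"
  assumes "c > 0" and deriv: "\<forall>\<^sub>F t in at_top. (y has_real_derivative g t - c * y t) (at t)"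
    and "(g \<longlongrightarrow> c * L) at_top"
  shows "(y \<longlongrightarrow> L) at_top"
proof (rule order_tendstoI)
  fix a assume "L < a"
  with assms show "\<forall>\<^sub>F t in at_top. y t < a" by (rule eventually_linear_ode_less)
next
  fix a assume "a < L"
  have "\<forall>\<^sub>F t in at_top. ((\<lambda>t. - y t) has_real_derivative - g t - c * - y t) (at t)"
    using deriv by eventually_elim (auto intro!: derivative_eq_intros)
  moreover have "((\<lambda>t. - g t) \<longlongrightarrow> c * - L) at_top"
    using tendsto_minus[OF \<open>(g \<longlongrightarrow> c * L) at_top\<close>] by simp
  ultimately have "\<forall>\<^sub>F t in at_top. - y t < - a"
    using \<open>c > 0\<close> \<open>a < L\<close> by (intro eventually_linear_ode_less[where L = "- L"]) auto
  then show "\<forall>\<^sub>F t in at_top. a < y t" by simp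
qed

lemma has_real_derivative_of_integral_eq:
  fixes y G :: "real \<Rightarrow> real"
  assumes G: "continuous_on {a..} G" and y: "\<And>t. a \<le> t \<Longrightarrow> y t = y a + integral {a..t} G"
    and "a < t"
  shows "(y has_real_derivative G t) (at t)"
proof -
  have "((\<lambda>x. integral {a..x} G) has_real_derivative G t) (at t within {a..t + 1})"
    using \<open>a < t\<close> by (intro integral_has_real_derivative continuous_on_subset[OF G]) auto
  then have "((\<lambda>x. integral {a..x} G) has_real_derivative G t) (at t)"
    using \<open>a < t\<close> by (simp add: at_within_Icc_at)
  then have "((\<lambda>x. y a + integral {a..x} G) has_real_derivative G t) (at t)"
    using DERIV_add[OF DERIV_const] by fastforce
  then show ?thesis
  proof (rule has_field_derivative_transform_within_open[where S = "{a<..}"])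
    show "y a + integral {a..x} G = y x" if "x \<in> {a<..}" for x
      using y[of x] that by simp
  qed (use \<open>a < t\<close> in auto)
qed

section \<open>Probability measures concentrated on a compact set\<close>

definition borel_prob_on :: "'a::topological_space set \<Rightarrow> 'a measure \<Rightarrow> bool" where
  "borel_prob_on K M \<longleftrightarrow> prob_space M \<and> sets M = sets borel \<and> emeasure M K = 1"

lemma borel_prob_on_AE_mem:
  assumes "borel_prob_on K M"
  shows "AE x in M. x \<in> K"
proof -
  interpret prob_space M using assms by (simp add: borel_prob_on_def)
  have "prob K = 1" using assms by (simp add: borel_prob_on_def measure_def)
  then show ?thesis by (rule AE_prob_1)
qed

lemma borel_prob_on_integrable_continuous:
  fixes \<phi> :: "'a::topological_space \<Rightarrow> real"
  assumes "borel_prob_on K M" "compact K" "continuous_on UNIV \<phi>"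
  shows "integrable M \<phi>"
proof -
  interpret prob_space M using assms by (simp add: borel_prob_on_def)
  obtain B where B: "\<And>x. x \<in> K \<Longrightarrow> \<bar>\<phi> x\<bar> \<le> B"
    using compact_imp_bounded[OF compact_continuous_image[OF
        continuous_on_subset[OF assms(3) subset_UNIV] assms(2)]]
    by (auto simp: bounded_iff)
  have "sets M = sets borel" using assms(1) by (simp add: borel_prob_on_def)
  then have "\<phi> \<in> borel_measurable M"
    using borel_measurable_continuous_onI[OF assms(3)] by (simp cong: measurable_cong_sets)
  moreover have "AE x in M. norm (\<phi> x) \<le> B"
    using borel_prob_on_AE_mem[OF assms(1)] by eventually_elim (simp add: B)
  ultimately show ?thesis by (rule integrable_const_bound[rotated])
qed

lemma continuous_quadratic_majorant:
  fixes \<phi> :: "real \<Rightarrow> real"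
  assumes "continuous_on UNIV \<phi>" "compact K" "e > 0"
  obtains C where "C \<ge> 0" "\<And>w. w \<in> K \<Longrightarrow> \<bar>\<phi> w - \<phi> L\<bar> \<le> e + C * (w - L)\<^sup>2"
proof -
  have "\<forall>e>0. \<exists>d>0. \<forall>w. dist w L < d \<longrightarrow> dist (\<phi> w) (\<phi> L) < e"
    using assms(1) by (simp add: continuous_on_iff)
  then obtain d where "d > 0" and d: "\<And>w. \<bar>w - L\<bar> < d \<Longrightarrow> \<bar>\<phi> w - \<phi> L\<bar> < e"
    using \<open>e > 0\<close> unfolding dist_real_def by blast
  obtain B where B: "\<And>w. w \<in> K \<Longrightarrow> \<bar>\<phi> w\<bar> \<le> B"
    using compact_imp_bounded[OF compact_continuous_image[OF
        continuous_on_subset[OF assms(1) subset_UNIV] assms(2)]]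
    by (auto simp: bounded_iff)
  define C where "C = (\<bar>B\<bar> + \<bar>\<phi> L\<bar>) / d\<^sup>2"
  have "C \<ge> 0" by (simp add: C_def)
  moreover have "\<bar>\<phi> w - \<phi> L\<bar> \<le> e + C * (w - L)\<^sup>2" if "w \<in> K" for w
  proof (cases "\<bar>w - L\<bar> < d")
    case True
    moreover have "0 \<le> C * (w - L)\<^sup>2" using \<open>C \<ge> 0\<close> by simp
    ultimately show ?thesis using d[of w] by linarith
  next
    case False
    then have "d\<^sup>2 \<le> \<bar>w - L\<bar>\<^sup>2"
      using \<open>d > 0\<close> by (intro power_mono) auto
    then have "d\<^sup>2 \<le> (w - L)\<^sup>2" by simp
    have "\<bar>B\<bar> + \<bar>\<phi> L\<bar> = C * d\<^sup>2"
      using \<open>d > 0\<close> by (simp add: C_def)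
    also have "\<dots> \<le> C * (w - L)\<^sup>2"
      using \<open>d\<^sup>2 \<le> (w - L)\<^sup>2\<close> \<open>C \<ge> 0\<close> by (rule mult_left_mono)
    finally show ?thesis using B[OF that] \<open>e > 0\<close> by linarith
  qed
  ultimately show ?thesis by (rule that)
qed

lemma tendsto_integral_of_second_moment_tendsto_0:
  fixes \<phi> :: "real \<Rightarrow> real" and M :: "'i \<Rightarrow> real measure"
  assumes prob: "\<forall>\<^sub>F t in F. borel_prob_on K (M t)" and "compact K" "continuous_on UNIV \<phi>"
    and second_moment: "((\<lambda>t. \<integral>w. (w - L)\<^sup>2 \<partial>M t) \<longlongrightarrow> 0) F"
  shows "((\<lambda>t. \<integral>w. \<phi> w \<partial>M t) \<longlongrightarrow> \<phi> L) F"
proof (rule tendstoI)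
  fix e :: real assume "e > 0"
  then obtain C where "C \<ge> 0" and C: "\<And>w. w \<in> K \<Longrightarrow> \<bar>\<phi> w - \<phi> L\<bar> \<le> e / 2 + C * (w - L)\<^sup>2"
    using continuous_quadratic_majorant[OF assms(3,2), of "e / 2"] by auto
  have "((\<lambda>t. C * (\<integral>w. (w - L)\<^sup>2 \<partial>M t)) \<longlongrightarrow> C * 0) F"
    by (intro tendsto_mult_left second_moment)
  then have "\<forall>\<^sub>F t in F. C * (\<integral>w. (w - L)\<^sup>2 \<partial>M t) < e / 2"
    by (rule order_tendstoD) (simp add: \<open>e > 0\<close>)
  with prob show "\<forall>\<^sub>F t in F. dist (\<integral>w. \<phi> w \<partial>M t) (\<phi> L) < e"
  proof eventually_elim
    case (elim t)
    interpret prob_space "M t" using elim(1) by (simp add: borel_prob_on_def)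
    have int: "integrable (M t) \<psi>" if "continuous_on UNIV \<psi>" for \<psi> :: "real \<Rightarrow> real"
      using elim(1) \<open>compact K\<close> that by (rule borel_prob_on_integrable_continuous)
    have "\<bar>(\<integral>w. \<phi> w \<partial>M t) - \<phi> L\<bar> = \<bar>\<integral>w. \<phi> w - \<phi> L \<partial>M t\<bar>"
      using int[OF \<open>continuous_on UNIV \<phi>\<close>] by (simp add: prob_space)
    also have "\<dots> \<le> (\<integral>w. \<bar>\<phi> w - \<phi> L\<bar> \<partial>M t)"
      by (rule integral_abs_bound)
    also have "\<dots> \<le> (\<integral>w. e / 2 + C * (w - L)\<^sup>2 \<partial>M t)"
      using borel_prob_on_AE_mem[OF elim(1)]
      by (intro integral_mono_AE int continuous_intros assms(3)) (auto elim: eventually_mono intro: C)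
    also have "\<dots> = e / 2 + C * (\<integral>w. (w - L)\<^sup>2 \<partial>M t)"
      using int[of "\<lambda>w. (w - L)\<^sup>2"] by (simp add: prob_space continuous_intros)
    finally show ?case using elim(2) by (simp add: dist_real_def)
  qed
qed

section \<open>The limit opinions\<close>

definition relaxation_rate :: "nat \<Rightarrow> real \<Rightarrow> (nat \<Rightarrow> real) \<Rightarrow> (nat \<Rightarrow> real) \<Rightarrow> nat \<Rightarrow> real" where
  "relaxation_rate N \<alpha> fS fNS i = \<alpha> * (\<Sum>j\<in>{i..N}. fS j) + (1 - \<alpha>) * (\<Sum>j\<in>{i+1..N}. fNS j)"

declare minf_NS.simps [simp del]

lemma minf_NS_top: "minf_NS N \<alpha> fS fNS mS m0 N = (if \<alpha> * fS N = 0 then m0 else mS N)"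
  by (subst minf_NS.simps) simp

lemma minf_NS_below:
  "i < N \<Longrightarrow> minf_NS N \<alpha> fS fNS mS m0 i =
     ((1 - \<alpha>) * (\<Sum>j\<in>{i+1..N}. fNS j * minf_NS N \<alpha> fS fNS mS m0 j) + \<alpha> * (\<Sum>j\<in>{i..N}. fS j * mS j))
     / relaxation_rate N \<alpha> fS fNS i"
  by (subst minf_NS.simps) (simp add: relaxation_rate_def)

lemma minf_NS_eq_top_if_no_stubborn_below:
  assumes no_stubborn: "\<And>j. j \<in> {1..<N} \<Longrightarrow> \<alpha> * fS j = 0"
    and rate: "\<And>j. j \<in> {1..<N} \<Longrightarrow> relaxation_rate N \<alpha> fS fNS j \<noteq> 0"
    and "i \<in> {1..N}"
  shows "minf_NS N \<alpha> fS fNS mS m0 i = minf_NS N \<alpha> fS fNS mS m0 N"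
  using \<open>i \<in> {1..N}\<close>
proof (induction i rule: nat_descend_induct[of N])
  case (descend i)
  let ?m = "minf_NS N \<alpha> fS fNS mS m0"
  show ?case
  proof (cases "i = N")
    case False
    with descend.prems have "i \<in> {1..<N}" by simp
    have stubborn: "\<alpha> * (fS j * mS j) = \<alpha> * (fS j * ?m N)" if "j \<in> {i..N}" for j
    proof (cases "j = N")
      case True
      then show ?thesis
        by (cases "\<alpha> * fS N = 0") (simp_all add: minf_NS_top mult.assoc[symmetric])
    next
      case False
      with that \<open>i \<in> {1..<N}\<close> have "\<alpha> * fS j = 0" by (intro no_stubborn) auto
      then show ?thesis by (simp add: mult.assoc[symmetric])
    qed
    have "(\<Sum>j\<in>{i+1..N}. fNS j * ?m j) = (\<Sum>j\<in>{i+1..N}. fNS j * ?m N)"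
    proof (rule sum.cong)
      fix j assume "j \<in> {i+1..N}"
      with descend.IH[of j] \<open>i \<in> {1..<N}\<close> show "fNS j * ?m j = fNS j * ?m N" by simp
    qed simp
    moreover have "\<alpha> * (\<Sum>j\<in>{i..N}. fS j * mS j) = \<alpha> * (\<Sum>j\<in>{i..N}. fS j * ?m N)"
      unfolding sum_distrib_left by (rule sum.cong) (simp_all add: stubborn)
    ultimately have "(1 - \<alpha>) * (\<Sum>j\<in>{i+1..N}. fNS j * ?m j) + \<alpha> * (\<Sum>j\<in>{i..N}. fS j * mS j)
        = relaxation_rate N \<alpha> fS fNS i * ?m N"
      unfolding relaxation_rate_def sum_distrib_right[symmetric] by (simp add: algebra_simps)
    then have "?m i = relaxation_rate N \<alpha> fS fNS i * ?m N / relaxation_rate N \<alpha> fS fNS i"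
      using \<open>i \<in> {1..<N}\<close> by (simp add: minf_NS_below)
    then show ?thesis
      using rate[OF \<open>i \<in> {1..<N}\<close>] by simp
  qed simp
qed simp

section \<open>Moments of the non-stubborn opinion distributions\<close>

locale hierarchical_opinion_dynamics =
  fixes N :: nat and \<alpha> :: real and fS fNS mS :: "nat \<Rightarrow> real"
    and f :: "nat \<Rightarrow> real \<Rightarrow> real measure"
  assumes alpha: "0 \<le> \<alpha>" "\<alpha> \<le> 1"
    and fS_nonneg: "\<And>j. j \<in> {1..N} \<Longrightarrow> fS j \<ge> 0"
    and fNS_nonneg: "\<And>j. j \<in> {1..N} \<Longrightarrow> fNS j \<ge> 0"
    and f0_top: "\<alpha> * fS N + (1 - \<alpha>) * fNS N > 0"
    and f_prob: "\<And>i t. i \<in> {1..N} \<Longrightarrow> t \<ge> 0 \<Longrightarrow> borel_prob_on {-1..1} (f i t)"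
    and f_cont: "\<And>i (\<phi>::real \<Rightarrow> real). i \<in> {1..N} \<Longrightarrow> continuous_on UNIV \<phi> \<Longrightarrow>
                   continuous_on {0..} (\<lambda>t. \<integral>w. \<phi> w \<partial>(f i t))"
    and f_eq: "\<And>i t \<phi> \<phi>'. i \<in> {1..N} \<Longrightarrow> t \<ge> 0 \<Longrightarrow>
                 (\<And>w. (\<phi> has_real_derivative \<phi>' w) (at w)) \<Longrightarrow> continuous_on UNIV \<phi>' \<Longrightarrow>
                 (\<integral>w. \<phi> w \<partial>(f i t)) =
                   (\<integral>w. \<phi> w \<partial>(f i 0)) +
                   integral {0..t} (\<lambda>s. \<integral>w. \<phi>' w *
                      ((\<alpha> * (\<Sum>j\<in>{i..N}. fS j * mS j)
                         + (1 - \<alpha>) * (\<Sum>j\<in>{i..N}. fNS j * (\<integral>v. v \<partial>(f j s))))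
                       - (\<Sum>j\<in>{i..N}. \<alpha> * fS j + (1 - \<alpha>) * fNS j) * w) \<partial>(f i s))"
begin

definition mean :: "nat \<Rightarrow> real \<Rightarrow> real" where
  "mean i t = (\<integral>v. v \<partial>(f i t))"

(* drift and upper_mass are the paper's beta_i(t) and f_0([h_i,1]); source and rate are what
   remains of them after removing the self-interaction (1 - alpha) f_0^NS(h_i) of level i. *)

definition drift :: "nat \<Rightarrow> real \<Rightarrow> real" where
  "drift i t = \<alpha> * (\<Sum>j\<in>{i..N}. fS j * mS j) + (1 - \<alpha>) * (\<Sum>j\<in>{i..N}. fNS j * mean j t)"

definition upper_mass :: "nat \<Rightarrow> real" where
  "upper_mass i = (\<Sum>j\<in>{i..N}. \<alpha> * fS j + (1 - \<alpha>) * fNS j)"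

definition source :: "nat \<Rightarrow> real \<Rightarrow> real" where
  "source i t = \<alpha> * (\<Sum>j\<in>{i..N}. fS j * mS j) + (1 - \<alpha>) * (\<Sum>j\<in>{i+1..N}. fNS j * mean j t)"

abbreviation rate :: "nat \<Rightarrow> real" where
  "rate \<equiv> relaxation_rate N \<alpha> fS fNS"

abbreviation minf :: "nat \<Rightarrow> real" where
  "minf \<equiv> minf_NS N \<alpha> fS fNS mS (mean N 0)"

lemma moment_eq:
  assumes "i \<in> {1..N}" "t \<ge> 0" "\<And>w. (\<phi> has_real_derivative \<phi>' w) (at w)" "continuous_on UNIV \<phi>'"
  shows "(\<integral>w. \<phi> w \<partial>(f i t)) = (\<integral>w. \<phi> w \<partial>(f i 0)) +
           integral {0..t} (\<lambda>s. \<integral>w. \<phi>' w * (drift i s - upper_mass i * w) \<partial>(f i s))"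
  unfolding drift_def upper_mass_def mean_def using assms by (rule f_eq)

lemma prob_space_f: "i \<in> {1..N} \<Longrightarrow> t \<ge> 0 \<Longrightarrow> prob_space (f i t)"
  using f_prob by (simp add: borel_prob_on_def)

lemma integrable_f:
  fixes \<phi> :: "real \<Rightarrow> real"
  assumes "i \<in> {1..N}" "t \<ge> 0" "continuous_on UNIV \<phi>"
  shows "integrable (f i t) \<phi>"
  by (rule borel_prob_on_integrable_continuous[OF f_prob[OF assms(1,2)] _ assms(3)]) simp

lemma mean_continuous: "i \<in> {1..N} \<Longrightarrow> continuous_on {0..} (mean i)"
  using f_cont[of i "\<lambda>w. w"] by (simp add: mean_def[abs_def])

lemma drift_continuous: "i \<in> {1..N} \<Longrightarrow> continuous_on {0..} (drift i)"
  unfolding drift_def[abs_def] by (intro continuous_intros mean_continuous) auto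

lemma source_continuous: "i \<in> {1..N} \<Longrightarrow> continuous_on {0..} (source i)"
  unfolding source_def[abs_def] by (intro continuous_intros mean_continuous) auto

lemma upper_mass_pos:
  assumes "i \<in> {1..N}"
  shows "upper_mass i > 0"
proof -
  have "\<alpha> * fS N + (1 - \<alpha>) * fNS N \<le> upper_mass i"
    unfolding upper_mass_def using assms alpha fS_nonneg fNS_nonneg
    by (intro member_le_sum[where f = "\<lambda>j. \<alpha> * fS j + (1 - \<alpha>) * fNS j"]) auto
  with f0_top show ?thesis by linarith
qed

lemma rate_pos:
  assumes "i \<in> {1..<N}"
  shows "rate i > 0"
proof -
  have "\<alpha> * fS N \<le> \<alpha> * (\<Sum>j\<in>{i..N}. fS j)"
    using assms alpha fS_nonneg by (intro mult_left_mono member_le_sum) auto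
  moreover have "(1 - \<alpha>) * fNS N \<le> (1 - \<alpha>) * (\<Sum>j\<in>{i+1..N}. fNS j)"
    using assms alpha fNS_nonneg by (intro mult_left_mono member_le_sum) auto
  ultimately show ?thesis using f0_top by (simp add: relaxation_rate_def)
qed

lemma drift_eq_source:
  assumes "i \<in> {1..N}"
  shows "drift i t - upper_mass i * mean i t = source i t - rate i * mean i t"
proof -
  have drift_split: "drift i t = source i t + (1 - \<alpha>) * fNS i * mean i t"
    using assms by (simp add: drift_def source_def sum.atLeast_Suc_atMost algebra_simps)
  have "upper_mass i = \<alpha> * (\<Sum>j\<in>{i..N}. fS j) + (1 - \<alpha>) * (\<Sum>j\<in>{i..N}. fNS j)"
    unfolding upper_mass_def sum.distrib sum_distrib_left ..
  then have mass_split: "upper_mass i = rate i + (1 - \<alpha>) * fNS i"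
    using assms by (simp add: relaxation_rate_def sum.atLeast_Suc_atMost algebra_simps)
  show ?thesis unfolding drift_split mass_split by (simp add: algebra_simps)
qed

lemma mean_integral_eq:
  assumes "i \<in> {1..N}" "t \<ge> 0"
  shows "mean i t = mean i 0 + integral {0..t} (\<lambda>s. source i s - rate i * mean i s)"
proof -
  have "mean i t = mean i 0 + integral {0..t} (\<lambda>s. \<integral>w. 1 * (drift i s - upper_mass i * w) \<partial>(f i s))"
    unfolding mean_def using assms by (rule moment_eq) auto
  also have "integral {0..t} (\<lambda>s. \<integral>w. 1 * (drift i s - upper_mass i * w) \<partial>(f i s))
      = integral {0..t} (\<lambda>s. source i s - rate i * mean i s)"
  proof (rule integral_cong)
    fix s assume "s \<in> {0..t}"
    then have "s \<ge> 0" by simp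
    interpret prob_space "f i s" using prob_space_f[OF assms(1) \<open>s \<ge> 0\<close>] .
    have "integrable (f i s) (\<lambda>w. w)"
      using assms(1) \<open>s \<ge> 0\<close> by (rule integrable_f) simp
    then have "(\<integral>w. 1 * (drift i s - upper_mass i * w) \<partial>(f i s)) = drift i s - upper_mass i * mean i s"
      by (simp add: mean_def prob_space)
    also have "\<dots> = source i s - rate i * mean i s"
      using assms(1) by (rule drift_eq_source)
    finally show "(\<integral>w. 1 * (drift i s - upper_mass i * w) \<partial>(f i s)) = source i s - rate i * mean i s" .
  qed
  finally show ?thesis .
qed

lemma mean_has_derivative:
  assumes "i \<in> {1..N}" "t > 0"
  shows "(mean i has_real_derivative source i t - rate i * mean i t) (at t)"
proof (rule has_real_derivative_of_integral_eq[OF _ _ assms(2)])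
  show "continuous_on {0..} (\<lambda>s. source i s - rate i * mean i s)"
    using assms(1) by (intro continuous_intros source_continuous mean_continuous)
qed (rule mean_integral_eq[OF assms(1)])

lemma mean_tendsto_minf: "i \<in> {1..N} \<Longrightarrow> (mean i \<longlongrightarrow> minf i) at_top"
proof (induction i rule: nat_descend_induct[of N])
  case (descend i)
  have deriv: "\<forall>\<^sub>F t in at_top. (mean i has_real_derivative source i t - rate i * mean i t) (at t)"
    using eventually_gt_at_top[of 0] by eventually_elim (rule mean_has_derivative[OF descend.prems])
  have source_lim: "(source i \<longlongrightarrow>
      \<alpha> * (\<Sum>j\<in>{i..N}. fS j * mS j) + (1 - \<alpha>) * (\<Sum>j\<in>{i+1..N}. fNS j * minf j)) at_top"
    unfolding source_def[abs_def]
    by (intro tendsto_add tendsto_const tendsto_mult_left tendsto_sum descend.IH) auto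
  show ?case
  proof (cases "i = N")
    case False
    with descend.prems have "i \<in> {1..<N}" by simp
    from rate_pos[OF this] source_lim have "(source i \<longlongrightarrow> rate i * minf i) at_top"
      using \<open>i \<in> {1..<N}\<close> by (simp add: minf_NS_below add.commute)
    with rate_pos[OF \<open>i \<in> {1..<N}\<close>] deriv show ?thesis by (rule tendsto_linear_ode)
  next
    case True
    have rate_N: "rate N = \<alpha> * fS N" and source_N: "source N = (\<lambda>_. \<alpha> * fS N * mS N)"
      by (simp_all add: relaxation_rate_def source_def[abs_def] mult.assoc)
    show ?thesis
    proof (cases "\<alpha> * fS N = 0")
      case zero: True
      have "\<forall>\<^sub>F t in at_top. mean N t = mean N 0"
        using eventually_ge_at_top[of "0::real"]
      proof eventually_elim
        case (elim t)
        show ?case using mean_integral_eq[OF _ elim] descend.prems \<open>i = N\<close>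
          by (simp add: rate_N source_N zero)
      qed
      then show ?thesis
        using \<open>i = N\<close> zero by (simp add: minf_NS_top tendsto_eventually)
    next
      case nonzero: False
      with alpha fS_nonneg[of N] descend.prems \<open>i = N\<close> have "rate N > 0"
        by (simp add: rate_N)
      moreover have "(source N \<longlongrightarrow> rate N * mS N) at_top"
        by (simp add: rate_N source_N)
      ultimately show ?thesis
        using deriv \<open>i = N\<close> nonzero by (simp add: minf_NS_top tendsto_linear_ode)
    qed
  qed
qed simp

lemma second_moment_integral_eq:
  assumes "i \<in> {1..N}" "t \<ge> 0"
  shows "(\<integral>w. (w - L)\<^sup>2 \<partial>(f i t)) = (\<integral>w. (w - L)\<^sup>2 \<partial>(f i 0)) +
           integral {0..t} (\<lambda>s. 2 * (drift i s - upper_mass i * L) * (mean i s - L)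
                                 - 2 * upper_mass i * (\<integral>w. (w - L)\<^sup>2 \<partial>(f i s)))"
proof -
  have "(\<integral>w. (w - L)\<^sup>2 \<partial>(f i t)) = (\<integral>w. (w - L)\<^sup>2 \<partial>(f i 0)) +
      integral {0..t} (\<lambda>s. \<integral>w. 2 * (w - L) * (drift i s - upper_mass i * w) \<partial>(f i s))"
    using assms by (rule moment_eq) (auto intro!: derivative_eq_intros continuous_intros)
  also have "integral {0..t} (\<lambda>s. \<integral>w. 2 * (w - L) * (drift i s - upper_mass i * w) \<partial>(f i s))
      = integral {0..t} (\<lambda>s. 2 * (drift i s - upper_mass i * L) * (mean i s - L)
                               - 2 * upper_mass i * (\<integral>w. (w - L)\<^sup>2 \<partial>(f i s)))"
  proof (rule integral_cong)
    fix s assume "s \<in> {0..t}"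
    then have "s \<ge> 0" by simp
    interpret prob_space "f i s" using prob_space_f[OF assms(1) \<open>s \<ge> 0\<close>] .
    have pointwise: "2 * (w - L) * (d - A * w) = 2 * (d - A * L) * (w - L) - 2 * A * (w - L)\<^sup>2"
      for w d A :: real
      by (simp add: algebra_simps power2_eq_square)
    have "integrable (f i s) (\<lambda>w. w)" "integrable (f i s) (\<lambda>w. (w - L)\<^sup>2)"
      using assms(1) \<open>s \<ge> 0\<close> by (auto intro!: integrable_f continuous_intros)
    then show "(\<integral>w. 2 * (w - L) * (drift i s - upper_mass i * w) \<partial>(f i s))
        = 2 * (drift i s - upper_mass i * L) * (mean i s - L)
          - 2 * upper_mass i * (\<integral>w. (w - L)\<^sup>2 \<partial>(f i s))"
      unfolding pointwise by (simp add: mean_def prob_space)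
  qed
  finally show ?thesis .
qed

lemma second_moment_tendsto_0:
  assumes "i \<in> {1..N}"
  shows "((\<lambda>t. \<integral>w. (w - minf i)\<^sup>2 \<partial>(f i t)) \<longlongrightarrow> 0) at_top"
proof -
  define L where "L = minf i"
  define Q where "Q t = (\<integral>w. (w - L)\<^sup>2 \<partial>(f i t))" for t
  define g where "g s = 2 * (drift i s - upper_mass i * L) * (mean i s - L)" for s
  have Q_continuous: "continuous_on {0..} Q"
    unfolding Q_def[abs_def] by (rule f_cont[OF assms]) (intro continuous_intros)
  have drift_lim: "((\<lambda>s. drift i s - upper_mass i * L) \<longlongrightarrow>
      \<alpha> * (\<Sum>j\<in>{i..N}. fS j * mS j) + (1 - \<alpha>) * (\<Sum>j\<in>{i..N}. fNS j * minf j) - upper_mass i * L) at_top"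
    unfolding drift_def using assms
    by (intro tendsto_diff tendsto_add tendsto_const tendsto_mult_left tendsto_sum mean_tendsto_minf) auto
  have mean_lim: "((\<lambda>s. mean i s - L) \<longlongrightarrow> 0) at_top"
    using mean_tendsto_minf[OF assms] unfolding L_def by (rule LIM_zero)
  have g_lim: "(g \<longlongrightarrow> 2 * upper_mass i * 0) at_top"
    using tendsto_mult[OF tendsto_mult_left[OF drift_lim, of 2] mean_lim]
    by (simp add: g_def[abs_def])
  have Q_deriv: "(Q has_real_derivative g t - 2 * upper_mass i * Q t) (at t)" if "t > 0" for t
  proof (rule has_real_derivative_of_integral_eq[OF _ _ that])
    show "continuous_on {0..} (\<lambda>s. g s - 2 * upper_mass i * Q s)"
      unfolding g_def[abs_def] using assms
      by (intro continuous_intros drift_continuous mean_continuous Q_continuous)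
    show "Q s = Q 0 + integral {0..s} (\<lambda>s. g s - 2 * upper_mass i * Q s)" if "0 \<le> s" for s
      unfolding Q_def g_def by (rule second_moment_integral_eq[OF assms that])
  qed
  have deriv: "\<forall>\<^sub>F t in at_top. (Q has_real_derivative g t - 2 * upper_mass i * Q t) (at t)"
    using eventually_gt_at_top[of "0::real"] by (rule eventually_mono) (rule Q_deriv)
  have "(Q \<longlongrightarrow> 0) at_top"
    by (rule tendsto_linear_ode[OF _ deriv g_lim]) (use upper_mass_pos[OF assms] in simp)
  then show ?thesis unfolding Q_def L_def .
qed

lemma integral_tendsto_minf:
  fixes \<phi> :: "real \<Rightarrow> real"
  assumes "i \<in> {1..N}" "continuous_on UNIV \<phi>"
  shows "((\<lambda>t. \<integral>w. \<phi> w \<partial>(f i t)) \<longlongrightarrow> \<phi> (minf i)) at_top"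
proof (rule tendsto_integral_of_second_moment_tendsto_0)
  show "\<forall>\<^sub>F t in at_top. borel_prob_on {-1..1} (f i t)"
    using eventually_ge_at_top[of "0::real"] by (rule eventually_mono) (rule f_prob[OF assms(1)])
qed (auto intro: assms(2) second_moment_tendsto_0[OF assms(1)])

end

theorem theorem4p4:
  fixes N :: nat and \<alpha> :: real and h fS fNS mS :: "nat \<Rightarrow> real"
    and f :: "nat \<Rightarrow> real \<Rightarrow> real measure"
  assumes N_pos: "N \<ge> 1"
    and alpha: "0 \<le> \<alpha>" "\<alpha> \<le> 1"
    and h_mono: "strict_mono_on {1..N} h" and h_range: "0 \<le> h 1" "h N \<le> 1"
    and fS_nonneg: "\<And>j. j \<in> {1..N} \<Longrightarrow> fS j \<ge> 0"
    and fNS_nonneg: "\<And>j. j \<in> {1..N} \<Longrightarrow> fNS j \<ge> 0"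
    and fS_sum: "(\<Sum>j\<in>{1..N}. fS j) = 1"
    and fNS_sum: "(\<Sum>j\<in>{1..N}. fNS j) = 1"
    and f0_top: "\<alpha> * fS N + (1 - \<alpha>) * fNS N > 0"
    and mS_range: "\<And>j. j \<in> {1..N} \<Longrightarrow> mS j \<in> {-1..1}"
    and f_prob: "\<And>i t. i \<in> {1..N} \<Longrightarrow> t \<ge> 0 \<Longrightarrow> prob_space (f i t)"
    and f_sets: "\<And>i t. i \<in> {1..N} \<Longrightarrow> t \<ge> 0 \<Longrightarrow> sets (f i t) = sets borel"
    and f_supp: "\<And>i t. i \<in> {1..N} \<Longrightarrow> t \<ge> 0 \<Longrightarrow> emeasure (f i t) {-1..1} = 1"
    and f_cont: "\<And>i (\<phi>::real \<Rightarrow> real). i \<in> {1..N} \<Longrightarrow> continuous_on UNIV \<phi> \<Longrightarrow>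
                   continuous_on {0..} (\<lambda>t. \<integral>w. \<phi> w \<partial>(f i t))"
    and f_eq: "\<And>i t \<phi> \<phi>'. i \<in> {1..N} \<Longrightarrow> t \<ge> 0 \<Longrightarrow>
                 (\<And>w. (\<phi> has_real_derivative \<phi>' w) (at w)) \<Longrightarrow> continuous_on UNIV \<phi>' \<Longrightarrow>
                 (\<integral>w. \<phi> w \<partial>(f i t)) =
                   (\<integral>w. \<phi> w \<partial>(f i 0)) +
                   integral {0..t} (\<lambda>s. \<integral>w. \<phi>' w *
                      ((\<alpha> * (\<Sum>j\<in>{i..N}. fS j * mS j)
                         + (1 - \<alpha>) * (\<Sum>j\<in>{i..N}. fNS j * (\<integral>v. v \<partial>(f j s))))
                       - (\<Sum>j\<in>{i..N}. \<alpha> * fS j + (1 - \<alpha>) * fNS j) * w) \<partial>(f i s))"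
  shows "(\<forall>i\<in>{1..N}. \<forall>\<phi>::real \<Rightarrow> real. continuous_on UNIV \<phi> \<longrightarrow>
            ((\<lambda>t. \<integral>w. \<phi> w \<partial>(f i t)) \<longlongrightarrow>
              (\<integral>w. \<phi> w \<partial>(return borel
                 (minf_NS N \<alpha> fS fNS mS (\<integral>v. v \<partial>(f N 0)) i)))) at_top)
       \<and> ((\<forall>i\<in>{1..<N}. \<alpha> * fS i = 0) \<longrightarrow>
            (\<forall>i\<in>{1..<N}. minf_NS N \<alpha> fS fNS mS (\<integral>v. v \<partial>(f N 0)) i
                        = minf_NS N \<alpha> fS fNS mS (\<integral>v. v \<partial>(f N 0)) N))"
proof -
  interpret hierarchical_opinion_dynamics N \<alpha> fS fNS mS f
    using alpha fS_nonneg fNS_nonneg f0_top f_cont f_eq f_prob f_sets f_supp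
    by unfold_locales (auto simp: borel_prob_on_def)
  have mean_N_0: "mean N 0 = (\<integral>v. v \<partial>(f N 0))"
    by (simp add: mean_def)
  have weak_limit: "((\<lambda>t. \<integral>w. \<phi> w \<partial>(f i t)) \<longlongrightarrow> (\<integral>w. \<phi> w \<partial>(return borel (minf i)))) at_top"
    if "i \<in> {1..N}" "continuous_on UNIV \<phi>" for i and \<phi> :: "real \<Rightarrow> real"
    using integral_tendsto_minf[OF that] borel_measurable_continuous_onI[OF that(2)]
    by (simp add: integral_return)
  have no_stubborn_below: "minf i = minf N"
    if no_stubborn: "\<forall>j\<in>{1..<N}. \<alpha> * fS j = 0" and "i \<in> {1..<N}" for i
  proof (rule minf_NS_eq_top_if_no_stubborn_below)
    show "\<alpha> * fS j = 0" if "j \<in> {1..<N}" for j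
      using no_stubborn that by blast
    show "rate j \<noteq> 0" if "j \<in> {1..<N}" for j
      using rate_pos[OF that] by simp
  qed (use that in auto)
  show ?thesis
    unfolding mean_N_0[symmetric] using weak_limit no_stubborn_below by blast
qed
end
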